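(* Let $N\geq2$, let $|\psi\rangle\in\mathrm{Sym}_N$ be nonzero, and let $n=\lfloor N/2\rfloor+1$. Let $\rho^{(n)}=\mathrm{Tr}_{N-n}(|\psi\rangle\langle\psi|)$ be the reduced operator on the first $n$ qubits (with $\rho^{(N)}=|\psi\rangle\langle\psi|$ if $n=N$). Then there exists a nonzero $|\phi\rangle\in\mathrm{Sym}_n$ with $\rho^{(n)}|\phi\rangle=0$. Consequently, the operator $H=\sum_{i=1}^N h_i$, where $h_i$ is the orthogonal projector onto $\ker(\rho^{(n)})\cap\mathrm{Sym}_n$ acting on qubits $i,i+1,\dots,i+n-1$ (indices mod $N$), is a nonzero positive semidefinite operator with $H|\psi\rangle=0$.
   Context: The one-qubit space is $\mathbb{C}^2$. $\mathrm{Sym}_n\subset(\mathbb{C}^2)^{\otimes n}$ denotes the symmetric subspace (vectors invariant under all permutations of the tensor factors), of dimension $n+1$. *)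

theory Defs
  imports Complex_Main "HOL-Combinatorics.Permutations"
begin

text \<open>n-qubit space (C^2)^{\<otimes>n}: computational basis = bool lists of length n.
  A vector is a function bool list => complex vanishing off length-n lists;
  an operator is a matrix bool list => bool list => complex.\<close>

type_synonym qvec = "bool list \<Rightarrow> complex"
type_synonym qop = "bool list \<Rightarrow> bool list \<Rightarrow> complex"

definition basis :: "nat \<Rightarrow> bool list set" where
  "basis n = {xs. length xs = n}"

definition is_vec :: "nat \<Rightarrow> qvec \<Rightarrow> bool" where
  "is_vec n v \<longleftrightarrow> (\<forall>xs. length xs \<noteq> n \<longrightarrow> v xs = 0)"

definition is_op :: "nat \<Rightarrow> qop \<Rightarrow> bool" where
  "is_op n A \<longleftrightarrow> (\<forall>x y. length x \<noteq> n \<or> length y \<noteq> n \<longrightarrow> A x y = 0)"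

definition sym_vec :: "nat \<Rightarrow> qvec \<Rightarrow> bool" where
  "sym_vec n v \<longleftrightarrow> is_vec n v \<and>
     (\<forall>p xs. p permutes {..<n} \<longrightarrow> length xs = n \<longrightarrow> v (permute_list p xs) = v xs)"

definition app :: "nat \<Rightarrow> qop \<Rightarrow> qvec \<Rightarrow> qvec" where
  "app n A v = (\<lambda>x. if length x = n then (\<Sum>y\<in>basis n. A x y * v y) else 0)"

definition inner :: "nat \<Rightarrow> qvec \<Rightarrow> qvec \<Rightarrow> complex" where
  "inner n u v = (\<Sum>x\<in>basis n. cnj (u x) * v x)"

definition reduced :: "nat \<Rightarrow> nat \<Rightarrow> qvec \<Rightarrow> qop" where
  "reduced N k psi = (\<lambda>x y. if length x = k \<and> length y = k then
      (\<Sum>z\<in>basis (N - k). psi (x @ z) * cnj (psi (y @ z))) else 0)"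

definition is_orth_proj :: "nat \<Rightarrow> qvec set \<Rightarrow> qop \<Rightarrow> bool" where
  "is_orth_proj n K P \<longleftrightarrow> is_op n P \<and>
     (\<forall>x y. P x y = cnj (P y x)) \<and>
     (\<forall>v. is_vec n v \<longrightarrow> app n P v \<in> K) \<and>
     (\<forall>v\<in>K. app n P v = v)"

definition orth_proj :: "nat \<Rightarrow> qvec set \<Rightarrow> qop" where
  "orth_proj n K = (THE P. is_orth_proj n K P)"

text \<open>Embed an n-qubit operator P into N qubits, acting on qubits
  i, i+1, ..., i+n-1 (mod N), 0-based, in that order, identity elsewhere.\<close>
definition window :: "nat \<Rightarrow> nat \<Rightarrow> nat \<Rightarrow> bool list \<Rightarrow> bool list" where
  "window N n i x = map (\<lambda>j. x ! ((i + j) mod N)) [0..<n]"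

definition embed :: "nat \<Rightarrow> nat \<Rightarrow> nat \<Rightarrow> qop \<Rightarrow> qop" where
  "embed N n i P = (\<lambda>x y. if length x = N \<and> length y = N \<and>
       (\<forall>k<N. k \<notin> (\<lambda>j. (i + j) mod N) ` {..<n} \<longrightarrow> x ! k = y ! k)
     then P (window N n i x) (window N n i y) else 0)"

definition psd :: "nat \<Rightarrow> qop \<Rightarrow> bool" where
  "psd n A \<longleftrightarrow> (\<forall>v. is_vec n v \<longrightarrow>
      Im (inner n v (app n A v)) = 0 \<and> Re (inner n v (app n A v)) \<ge> 0)"

end

theory Submission
  imports Defs "HOL-Library.Function_Algebras"
begin

text \<open>Sym_n is spanned by the n + 1 independent Dicke states. For symmetric psi the reduced
  operator is rho = sum_z |psi_z><psi_z|, summed over the slices psi_z = (I \<otimes> <z|) psi with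
  z in {0,1}^(N-n); by symmetry psi_z depends only on the Hamming weight of z, so the range of rho
  has dimension at most N - n + 1 \<le> n and rho must kill some nonzero symmetric vector.
  A kernel vector of rho is orthogonal to every slice, so the projector P onto the symmetric
  kernel annihilates every slice, i.e. (P \<otimes> I) psi = 0; by the cyclic symmetry of psi the
  same holds for every translate h_i. Each h_i is positive semidefinite, and H is nonzero because
  a nonzero projector has a positive diagonal entry, which the other terms cannot cancel.\<close>

section \<open>Linear algebra on the n-qubit space\<close>

definition qscale :: "complex \<Rightarrow> qvec \<Rightarrow> qvec" where
  "qscale c v = (\<lambda>x. c * v x)"

interpretation qv: vector_space qscale
  by unfold_locales (auto simp: qscale_def fun_eq_iff algebra_simps)

interpretation qvp: vector_space_pair qscale qscale ..

lemma qscale_apply: "qscale c v x = c * v x"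
  by (simp add: qscale_def)

lemma sum_fun_apply: "(\<Sum>i\<in>I. f i) x = (\<Sum>i\<in>I. f i x)"
  by (induction I rule: infinite_finite_induct) auto

lemma finite_basis [simp]: "finite (basis n)"
proof -
  have "basis n = {xs. set xs \<subseteq> UNIV \<and> length xs = n}"
    by (auto simp: basis_def)
  thus ?thesis
    using finite_lists_length_eq[of "UNIV :: bool set" n] by simp
qed

lemma mem_basis [simp]: "x \<in> basis n \<longleftrightarrow> length x = n"
  by (simp add: basis_def)

lemma is_vecD: "is_vec n v \<Longrightarrow> length x \<noteq> n \<Longrightarrow> v x = 0"
  by (simp add: is_vec_def)

lemma app_apply: "length x = n \<Longrightarrow> app n A v x = (\<Sum>y\<in>basis n. A x y * v y)"
  by (simp add: app_def)

lemma app_outside: "length x \<noteq> n \<Longrightarrow> app n A v x = 0"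
  by (simp add: app_def)

lemma is_vec_app: "is_vec n (app n A v)"
  by (simp add: is_vec_def app_def)

lemma linear_app: "Vector_Spaces.linear qscale qscale (app n A)"
  by unfold_locales
    (auto simp: app_def fun_eq_iff algebra_simps sum.distrib sum_distrib_left qscale_apply)

lemma app_qscale: "app n A (qscale c v) = qscale c (app n A v)"
  and app_diff: "app n A (u - v) = app n A u - app n A v"
  using qvp.linear_scale[OF linear_app] qvp.linear_diff[OF linear_app] by blast+

lemma app_op_sum:
  "finite I \<Longrightarrow> app n (\<lambda>x y. \<Sum>i\<in>I. A i x y) v = (\<Sum>i\<in>I. app n (A i) v)"
  by (auto simp: app_def fun_eq_iff sum_fun_apply sum_distrib_right intro: sum.swap)

lemma inner_diff_right: "inner n u (v - w) = inner n u v - inner n u w"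
  by (simp add: inner_def algebra_simps sum_subtractf)

lemma inner_diff_left: "inner n (v - w) u = inner n v u - inner n w u"
  by (simp add: inner_def algebra_simps sum_subtractf)

lemma inner_qscale_right: "inner n u (qscale c v) = c * inner n u v"
  by (simp add: inner_def algebra_simps sum_distrib_left qscale_apply)

lemma inner_sum_right: "inner n u (\<Sum>i\<in>I. f i) = (\<Sum>i\<in>I. inner n u (f i))"
  unfolding inner_def sum_fun_apply by (simp add: sum_distrib_left) (rule sum.swap)

lemma cnj_inner: "cnj (inner n u v) = inner n v u"
  by (simp add: inner_def mult.commute)

lemma inner_self_eq_sum_norm: "inner n v v = of_real (\<Sum>x\<in>basis n. (cmod (v x))\<^sup>2)"
  unfolding inner_def of_real_sum
  by (intro sum.cong refl) (metis complex_norm_square mult.commute of_real_power)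

lemma inner_self_eq_0:
  assumes "is_vec n v" "inner n v v = 0"
  shows "v = 0"
proof -
  have "(\<Sum>x\<in>basis n. (cmod (v x))\<^sup>2) = 0"
    using assms(2) inner_self_eq_sum_norm[of n v] by (metis of_real_eq_0_iff)
  hence "\<forall>x\<in>basis n. v x = 0"
    by (subst (asm) sum_nonneg_eq_0_iff) auto
  thus ?thesis using assms(1) by (auto simp: fun_eq_iff is_vec_def)
qed

definition ket :: "bool list \<Rightarrow> qvec" where
  "ket y = (\<lambda>x. if x = y then 1 else 0)"

lemma is_vec_ket: "length y = n \<Longrightarrow> is_vec n (ket y)"
  by (simp add: is_vec_def ket_def)

lemma inner_ket_left: "length y = n \<Longrightarrow> inner n (ket y) v = v y"
  by (simp add: inner_def ket_def if_distrib[of cnj] if_distrib[of "\<lambda>c. c * _"] cong: if_cong)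

lemma app_ket: "length y = n \<Longrightarrow> app n A (ket y) x = (if length x = n then A x y else 0)"
  by (simp add: app_def ket_def if_distrib cong: if_cong)

lemma is_vec_in_span_kets:
  assumes "is_vec n v"
  shows "v \<in> qv.span (ket ` basis n)"
proof -
  have "v = (\<Sum>y\<in>basis n. qscale (v y) (ket y))"
    using assms
    by (auto simp: fun_eq_iff sum_fun_apply qscale_apply ket_def is_vec_def if_distrib cong: if_cong)
  also have "\<dots> \<in> qv.span (ket ` basis n)"
    by (intro qv.span_sum qv.span_scale qv.span_base imageI)
  finally show ?thesis .
qed

lemma psd_diag_nonneg: "psd n A \<Longrightarrow> length a = n \<Longrightarrow> Re (A a a) \<ge> 0"
  unfolding psd_def using is_vec_ket[of a n] by (metis app_ket inner_ket_left)

lemma psd_sum: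
  assumes "finite I" "\<And>i. i \<in> I \<Longrightarrow> psd n (A i)"
  shows "psd n (\<lambda>x y. \<Sum>i\<in>I. A i x y)"
  using assms unfolding psd_def
  by (simp add: app_op_sum inner_sum_right sum_nonneg)

section \<open>Orthogonal projectors\<close>

definition hermitian :: "qop \<Rightarrow> bool" where
  "hermitian A \<longleftrightarrow> (\<forall>x y. A x y = cnj (A y x))"

lemma hermitian_cnj: "hermitian A \<Longrightarrow> cnj (A x y) = A y x"
  unfolding hermitian_def by (metis complex_cnj_cnj)

lemma hermitian_inner_app:
  assumes "hermitian A"
  shows "inner n (app n A u) v = inner n u (app n A v)"
proof -
  have "inner n (app n A u) v = (\<Sum>x\<in>basis n. \<Sum>y\<in>basis n. cnj (A x y) * cnj (u y) * v x)"
    by (simp add: inner_def app_def sum_distrib_right)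
  also have "\<dots> = (\<Sum>y\<in>basis n. \<Sum>x\<in>basis n. cnj (u y) * (A y x * v x))"
    by (subst sum.swap) (simp add: hermitian_cnj[OF assms] mult_ac)
  also have "\<dots> = inner n u (app n A v)"
    by (simp add: inner_def app_def sum_distrib_left)
  finally show ?thesis .
qed

lemma is_orth_projD:
  assumes "is_orth_proj n K P"
  shows "is_op n P" "hermitian P" "\<And>v. is_vec n v \<Longrightarrow> app n P v \<in> K"
    "\<And>v. v \<in> K \<Longrightarrow> app n P v = v"
  using assms unfolding is_orth_proj_def hermitian_def by blast+

lemma is_orth_proj_idem:
  "is_orth_proj n K P \<Longrightarrow> is_vec n v \<Longrightarrow> app n P (app n P v) = app n P v"
  by (simp add: is_orth_projD)

lemma is_orth_proj_inner_app:
  assumes P: "is_orth_proj n K P" and v: "is_vec n v"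
  shows "inner n v (app n P v) = inner n (app n P v) (app n P v)"
  using hermitian_inner_app[OF is_orth_projD(2)[OF P], of n v "app n P v"]
  by (simp add: is_orth_proj_idem[OF P v])

lemma psd_orth_proj: "is_orth_proj n K P \<Longrightarrow> psd n P"
  unfolding psd_def
  by (simp add: is_orth_proj_inner_app inner_self_eq_sum_norm sum_nonneg)

lemma orth_proj_app_eq_0:
  assumes P: "is_orth_proj n K P" and v: "is_vec n v"
    and orth: "\<And>k. k \<in> K \<Longrightarrow> inner n k v = 0"
  shows "app n P v = 0"
proof -
  have "inner n (app n P v) v = 0"
    using orth is_orth_projD(3)[OF P v] .
  hence "inner n (app n P v) (app n P v) = 0"
    by (metis cnj_inner complex_cnj_zero is_orth_proj_inner_app[OF P v])
  thus ?thesis using inner_self_eq_0[OF is_vec_app] by blast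
qed

lemma orth_proj_diag:
  assumes P: "is_orth_proj n K P" and a: "length a = n"
  shows "P a a = of_real (\<Sum>x\<in>basis n. (cmod (P x a))\<^sup>2)"
proof -
  have "P a a = inner n (ket a) (app n P (ket a))"
    using a by (simp add: inner_ket_left app_ket)
  also have "\<dots> = inner n (app n P (ket a)) (app n P (ket a))"
    by (rule is_orth_proj_inner_app[OF P is_vec_ket[OF a]])
  also have "\<dots> = of_real (\<Sum>x\<in>basis n. (cmod (P x a))\<^sup>2)"
    unfolding inner_self_eq_sum_norm using a by (simp add: app_ket)
  finally show ?thesis .
qed

lemma orth_proj_diag_pos:
  assumes P: "is_orth_proj n K P" and "v \<in> K" "v \<noteq> 0"
  obtains a where "length a = n" "Re (P a a) > 0"
proof -
  have "app n P v \<noteq> 0"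
    using assms by (simp add: is_orth_projD(4)[OF P])
  then obtain b where "app n P v b \<noteq> 0"
    by (auto simp: fun_eq_iff)
  moreover from this have b: "length b = n"
    by (metis app_outside)
  ultimately obtain a where a: "length a = n" "P b a \<noteq> 0"
    by (auto simp: app_apply elim: sum.not_neutral_contains_not_neutral)
  have "0 < (cmod (P b a))\<^sup>2"
    using a(2) by simp
  also have "\<dots> \<le> (\<Sum>x\<in>basis n. (cmod (P x a))\<^sup>2)"
    by (rule member_le_sum) (use b in auto)
  finally have "Re (P a a) > 0"
    unfolding orth_proj_diag[OF P a(1)] by simp
  with a(1) show thesis by (rule that)
qed

lemma is_orth_proj_insert_orthogonal:
  assumes P: "is_orth_proj n (qv.span B) P" and r: "is_vec n r" "r \<noteq> 0"
    and orth: "\<And>s. s \<in> qv.span B \<Longrightarrow> inner n r s = 0"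
  shows "is_orth_proj n (qv.span (insert r B)) (\<lambda>x y. P x y + r x * cnj (r y) / inner n r r)"
    (is "is_orth_proj n ?S ?P'")
proof -
  define nr where "nr = inner n r r"
  have nr: "nr \<noteq> 0" "cnj nr = nr"
    using inner_self_eq_0[OF r(1)] r(2) cnj_inner[of n r r] by (auto simp: nr_def)
  have app_P': "app n ?P' v = app n P v + qscale (inner n r v / nr) r" for v
  proof (rule ext)
    fix x
    show "app n ?P' v x = (app n P v + qscale (inner n r v / nr) r) x"
      using is_vecD[OF r(1), of x]
      by (cases "length x = n") (simp_all add: app_apply app_outside inner_def nr_def
          algebra_simps qscale_apply sum.distrib sum_distrib_left sum_divide_distrib)
  qed
  have sub: "qv.span B \<subseteq> ?S"
    by (rule qv.span_mono) auto
  have Pr: "app n P r = 0"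
    using orth_proj_app_eq_0[OF P r(1)] orth by (metis cnj_inner complex_cnj_zero)
  show ?thesis
    unfolding is_orth_proj_def
  proof (intro conjI allI impI ballI)
    show "is_op n ?P'"
      using is_orth_projD(1)[OF P] is_vecD[OF r(1)] by (auto simp: is_op_def)
    show "?P' x y = cnj (?P' y x)" for x y
      by (simp add: hermitian_cnj[OF is_orth_projD(2)[OF P]] cnj_inner mult.commute)
    show "app n ?P' v \<in> ?S" if "is_vec n v" for v
      unfolding app_P' using sub is_orth_projD(3)[OF P that]
      by (intro qv.span_add qv.span_scale) (auto intro: qv.span_base)
    show "app n ?P' v = v" if v: "v \<in> ?S" for v
    proof -
      obtain k where s: "v - qscale k r \<in> qv.span B"
        using v by (auto simp: qv.span_insert)
      have "inner n r v = k * nr"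
        using orth[OF s] by (simp add: inner_diff_right inner_qscale_right nr_def)
      moreover have "app n P v = v - qscale k r"
        using is_orth_projD(4)[OF P s] by (simp add: app_diff app_qscale Pr)
      ultimately show ?thesis
        using nr(1) by (simp add: app_P')
    qed
  qed
qed

lemma span_insert_diff:
  assumes "c \<in> qv.span B"
  shows "qv.span (insert (b - c) B) = qv.span (insert b B)"
proof -
  have in_span: "x \<in> qv.span (insert x B)" "qv.span B \<subseteq> qv.span (insert x B)" for x
    by (simp_all add: qv.span_base qv.span_mono subset_insertI)
  have "(b - c) + c \<in> qv.span (insert (b - c) B)"
    using in_span[of "b - c"] assms by (intro qv.span_add) auto
  moreover have "b - c \<in> qv.span (insert b B)"
    using in_span[of b] assms by (intro qv.span_diff) auto
  ultimately show ?thesis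
    unfolding qv.span_eq by (auto intro: qv.span_base)
qed

lemma is_orth_proj_span_exists:
  assumes "finite B" "\<And>b. b \<in> B \<Longrightarrow> is_vec n b"
  shows "\<exists>P. is_orth_proj n (qv.span B) P"
  using assms
proof (induction B rule: finite_induct)
  case empty
  have "is_orth_proj n {0} (\<lambda>_ _. 0)"
    by (auto simp: is_orth_proj_def is_op_def app_def fun_eq_iff)
  thus ?case by (metis qv.span_empty)
next
  case (insert b B)
  then obtain P where P: "is_orth_proj n (qv.span B) P" by auto
  define r where "r = b - app n P b"
  have Pb: "app n P b \<in> qv.span B"
    using is_orth_projD(3)[OF P] insert.prems by simp
  show ?case
  proof (cases "r = 0")
    case True
    with Pb have "qv.span (insert b B) = qv.span B"
      by (intro qv.span_redundant) (simp add: r_def)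
    with P show ?thesis by auto
  next
    case False
    have "qv.span (insert b B) = qv.span (insert r B)"
      unfolding r_def using Pb by (rule span_insert_diff[symmetric])
    moreover have "is_vec n r"
      using insert.prems is_vec_app[of n P b] by (auto simp: r_def is_vec_def)
    moreover have "inner n r s = 0" if "s \<in> qv.span B" for s
      using hermitian_inner_app[OF is_orth_projD(2)[OF P], of n b s] is_orth_projD(4)[OF P that]
      by (simp add: r_def inner_diff_left)
    ultimately show ?thesis
      using is_orth_proj_insert_orthogonal[OF P _ False] by metis
  qed
qed

lemma is_orth_proj_comp:
  assumes P: "is_orth_proj n K P" and Q: "is_orth_proj n K Q" and "length x = n" "length y = n"
  shows "(\<Sum>w\<in>basis n. Q x w * P w y) = P x y"
proof -
  have "(\<Sum>w\<in>basis n. Q x w * P w y) = (\<Sum>w\<in>basis n. Q x w * app n P (ket y) w)"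
    using assms by (intro sum.cong refl) (simp add: app_ket)
  also have "\<dots> = app n Q (app n P (ket y)) x"
    using assms by (simp add: app_apply)
  also have "app n Q (app n P (ket y)) = app n P (ket y)"
    using assms by (simp add: is_orth_projD is_vec_ket)
  finally show ?thesis
    using assms by (simp add: app_ket)
qed

lemma is_orth_proj_unique:
  assumes P: "is_orth_proj n K P" and Q: "is_orth_proj n K Q"
  shows "P = Q"
proof (intro ext)
  fix x y
  show "P x y = Q x y"
  proof (cases "length x = n \<and> length y = n")
    case False
    thus ?thesis using is_orth_projD(1)[OF P] is_orth_projD(1)[OF Q]
      by (auto simp: is_op_def)
  next
    case True
    have "P x y = cnj (\<Sum>w\<in>basis n. Q y w * P w x)"
      using is_orth_proj_comp[OF P Q] True hermitian_cnj[OF is_orth_projD(2)[OF P]] by simp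
    also have "\<dots> = (\<Sum>w\<in>basis n. P x w * Q w y)"
      by (simp add: hermitian_cnj is_orth_projD(2)[OF P] is_orth_projD(2)[OF Q] mult.commute)
    also have "\<dots> = Q x y"
      using is_orth_proj_comp[OF Q P] True by simp
    finally show ?thesis .
  qed
qed

lemma is_orth_proj_orth_proj:
  assumes "qv.subspace K" "\<And>v. v \<in> K \<Longrightarrow> is_vec n v"
  shows "is_orth_proj n K (orth_proj n K)"
proof -
  obtain B where B: "B \<subseteq> K" "qv.independent B" "K \<subseteq> qv.span B"
    by (rule qv.basis_exists)
  have "B \<subseteq> qv.span (ket ` basis n)"
    using B(1) assms(2) is_vec_in_span_kets by blast
  hence "finite B"
    using qv.independent_span_bound[OF finite_imageI[OF finite_basis] B(2)] by blast
  moreover have "qv.span B = K"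
    using qv.span_subspace[OF B(1) B(3) assms(1)] .
  ultimately obtain P where P: "is_orth_proj n K P"
    using is_orth_proj_span_exists B(1) assms(2) by blast
  hence "orth_proj n K = P"
    unfolding orth_proj_def by (blast intro: is_orth_proj_unique)
  with P show ?thesis by simp
qed

section \<open>Symmetric vectors and Dicke states\<close>

lemma sym_vec_mset_eq:
  assumes "sym_vec N psi" "mset a = mset b" "length b = N"
  shows "psi a = psi b"
proof -
  obtain p where "p permutes {..<length b}" "permute_list p b = a"
    using mset_eq_permutation[OF assms(2)] by blast
  thus ?thesis using assms unfolding sym_vec_def by metis
qed

lemma mset_rotate: "mset (rotate k xs) = mset xs"
  by (metis append_take_drop_id mset_append rotate_drop_take union_commute)

lemma sym_vec_rotate: "sym_vec N psi \<Longrightarrow> length y = N \<Longrightarrow> psi (rotate k y) = psi y"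
  by (rule sym_vec_mset_eq) (simp_all add: mset_rotate)

definition canonical_word :: "nat \<Rightarrow> nat \<Rightarrow> bool list" where
  "canonical_word n k = replicate k True @ replicate (n - k) False"

lemma mset_canonical_word: "mset (canonical_word (length xs) (count_list xs True)) = mset xs"
proof (induction xs)
  case (Cons x xs)
  thus ?case
    using count_le_length[of xs True]
    by (cases x) (simp_all add: canonical_word_def Suc_diff_le)
qed (simp add: canonical_word_def)

lemma count_list_replicate: "count_list (replicate k x) y = (if x = y then k else 0)"
  by (induction k) auto

definition dicke :: "nat \<Rightarrow> nat \<Rightarrow> qvec" where
  "dicke n k = (\<lambda>x. if length x = n \<and> count_list x True = k then 1 else 0)"

lemma dicke_canonical_word: "k \<le> n \<Longrightarrow> dicke n j (canonical_word n k) = (if j = k then 1 else 0)"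
  by (simp add: dicke_def canonical_word_def count_list_replicate)

lemma sym_vec_dicke: "sym_vec n (dicke n k)"
  unfolding sym_vec_def is_vec_def
proof (intro conjI allI impI)
  fix p and xs :: "bool list"
  assume "p permutes {..<n}" "length xs = n"
  hence "count_list (permute_list p xs) True = count_list xs True"
    by (metis count_mset mset_permute_list)
  thus "dicke n k (permute_list p xs) = dicke n k xs"
    by (simp add: dicke_def)
qed (simp add: dicke_def)

lemma inj_on_dicke: "inj_on (dicke n) {0..n}"
  by (rule inj_onI) (metis atLeastAtMost_iff dicke_canonical_word zero_neq_one)

lemma independent_dicke: "qv.independent (dicke n ` {0..n})"
proof (rule qv.independent_if_scalars_zero)
  fix c v
  assume sum0: "(\<Sum>v\<in>dicke n ` {0..n}. qscale (c v) v) = 0" and "v \<in> dicke n ` {0..n}"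
  then obtain k where k: "k \<in> {0..n}" "v = dicke n k" by auto
  have "0 = (\<Sum>v\<in>dicke n ` {0..n}. qscale (c v) v) (canonical_word n k)"
    using sum0 by simp
  also have "\<dots> = (\<Sum>j\<in>{0..n}. c (dicke n j) * dicke n j (canonical_word n k))"
    by (simp add: sum_fun_apply qscale_apply sum.reindex[OF inj_on_dicke])
  also have "\<dots> = c (dicke n k)"
    using k by (simp add: dicke_canonical_word if_distrib cong: if_cong)
  finally show "c v = 0" using k by simp
qed simp

lemma subspace_sym_vec: "qv.subspace {phi. sym_vec n phi}"
  by (auto simp: qv.subspace_def sym_vec_def is_vec_def qscale_apply)

lemma subspace_sym_vec_kernel: "qv.subspace {phi. sym_vec n phi \<and> app n A phi = 0}"
  using qv.subspace_inter[OF subspace_sym_vec qvp.linear_subspace_kernel[OF linear_app]]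
  by (simp add: Int_def)

text \<open>The n + 1 Dicke states are independent, so no linear map from Sym_n into an
  at most n-dimensional space is injective on Sym_n.\<close>

lemma sym_vec_kernel_exists:
  assumes U: "finite U" "card U \<le> n" and range: "\<And>phi. app n A phi \<in> qv.span U"
  shows "\<exists>phi. sym_vec n phi \<and> phi \<noteq> 0 \<and> app n A phi = 0"
proof (rule ccontr)
  assume no_kernel: "\<not> ?thesis"
  define D where "D = dicke n ` {0..n}"
  have "qv.span D \<subseteq> {phi. sym_vec n phi}"
    by (rule qv.span_minimal[OF _ subspace_sym_vec]) (auto simp: D_def sym_vec_dicke)
  hence inj: "inj_on (app n A) (qv.span D)"
    using no_kernel by (auto simp: qvp.linear_inj_on_iff_eq_0[OF linear_app qv.subspace_span])
  have "card (app n A ` D) \<le> card U"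
    using qvp.linear_independent_injective_image[OF linear_app independent_dicke inj[unfolded D_def]]
      qv.independent_span_bound[OF U(1)] range unfolding D_def by blast
  moreover have "card (app n A ` D) = n + 1"
    using card_image[OF inj_on_subset[OF inj qv.span_superset]] card_image[OF inj_on_dicke]
    by (simp add: D_def)
  ultimately show False using U(2) by simp
qed

section \<open>A symmetric vector in the kernel of the reduced operator\<close>

definition slice :: "nat \<Rightarrow> qvec \<Rightarrow> bool list \<Rightarrow> qvec" where
  "slice n psi z = (\<lambda>x. if length x = n then psi (x @ z) else 0)"

lemma is_vec_slice: "is_vec n (slice n psi z)"
  by (simp add: is_vec_def slice_def)

lemma slice_apply: "length x = n \<Longrightarrow> slice n psi z x = psi (x @ z)"
  by (simp add: slice_def)

lemma inner_slice_left: "inner n (slice n psi z) phi = (\<Sum>y\<in>basis n. cnj (psi (y @ z)) * phi y)"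
  unfolding inner_def by (intro sum.cong refl) (simp add: slice_def)

lemma app_reduced:
  "app n (reduced N n psi) phi =
    (\<Sum>z\<in>basis (N - n). qscale (inner n (slice n psi z) phi) (slice n psi z))"
proof (rule ext)
  fix x
  show "app n (reduced N n psi) phi x =
    (\<Sum>z\<in>basis (N - n). qscale (inner n (slice n psi z) phi) (slice n psi z)) x"
  proof (cases "length x = n")
    case True
    have "app n (reduced N n psi) phi x =
        (\<Sum>y\<in>basis n. \<Sum>z\<in>basis (N - n). psi (x @ z) * cnj (psi (y @ z)) * phi y)"
      unfolding app_apply[OF True] by (intro sum.cong refl) (simp add: reduced_def True sum_distrib_right)
    also have "\<dots> = (\<Sum>z\<in>basis (N - n). \<Sum>y\<in>basis n. psi (x @ z) * cnj (psi (y @ z)) * phi y)"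
      by (rule sum.swap)
    finally show ?thesis
      using True by (simp add: sum_fun_apply qscale_apply inner_slice_left slice_apply
          sum_distrib_left sum_distrib_right mult_ac)
  qed (simp add: app_outside sum_fun_apply qscale_apply slice_def)
qed

lemma reduced_kernel_orthogonal_slice:
  assumes "app n (reduced N n psi) phi = 0" "length z = N - n"
  shows "inner n phi (slice n psi z) = 0"
proof -
  have "0 = inner n phi (app n (reduced N n psi) phi)"
    using assms(1) by (simp add: inner_def)
  also have "\<dots> = of_real (\<Sum>z\<in>basis (N - n). (cmod (inner n phi (slice n psi z)))\<^sup>2)"
    unfolding app_reduced inner_sum_right inner_qscale_right of_real_sum
    by (intro sum.cong refl) (metis cnj_inner complex_norm_square mult.commute)
  finally have "(\<Sum>z\<in>basis (N - n). (cmod (inner n phi (slice n psi z)))\<^sup>2) = 0"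
    by (metis of_real_eq_0_iff)
  hence "\<forall>z\<in>basis (N - n). (cmod (inner n phi (slice n psi z)))\<^sup>2 = 0"
    by (subst (asm) sum_nonneg_eq_0_iff) auto
  thus ?thesis using assms(2) by simp
qed

lemma slice_sym_vec:
  assumes "sym_vec N psi" "n \<le> N" "length z = N - n"
  shows "slice n psi z = slice n psi (canonical_word (N - n) (count_list z True))"
proof (rule ext)
  fix x
  have "psi (x @ z) = psi (x @ canonical_word (N - n) (count_list z True))"
    if "length x = n"
  proof (rule sym_vec_mset_eq[OF assms(1)])
    show "mset (x @ z) = mset (x @ canonical_word (N - n) (count_list z True))"
      using mset_canonical_word[of z] assms(3) by simp
    show "length (x @ canonical_word (N - n) (count_list z True)) = N"
      using that assms(2,3) count_le_length[of z True] by (simp add: canonical_word_def)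
  qed
  thus "slice n psi z x = slice n psi (canonical_word (N - n) (count_list z True)) x"
    by (simp add: slice_def)
qed

lemma reduced_range_sym_vec:
  assumes "sym_vec N psi" "n \<le> N"
  shows "app n (reduced N n psi) phi \<in>
    qv.span ((\<lambda>k. slice n psi (canonical_word (N - n) k)) ` {0..N - n})"
  unfolding app_reduced
proof (intro qv.span_sum qv.span_scale qv.span_base)
  fix z assume "z \<in> basis (N - n)"
  thus "slice n psi z \<in> (\<lambda>k. slice n psi (canonical_word (N - n) k)) ` {0..N - n}"
    using slice_sym_vec[OF assms] count_le_length[of z True] by auto
qed

lemma reduced_sym_kernel_exists:
  assumes "sym_vec N psi" "n \<le> N" "N < 2 * n"
  shows "\<exists>phi. sym_vec n phi \<and> phi \<noteq> 0 \<and> app n (reduced N n psi) phi = 0"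
proof (rule sym_vec_kernel_exists)
  show "card ((\<lambda>k. slice n psi (canonical_word (N - n) k)) ` {0..N - n}) \<le> n"
    by (rule order_trans[OF card_image_le]) (use assms(3) in auto)
qed (use reduced_range_sym_vec[OF assms(1,2)] in auto)

section \<open>Operators acting on a window of qubits\<close>

definition local_op :: "nat \<Rightarrow> nat \<Rightarrow> qop \<Rightarrow> qop" where
  "local_op N n P x y = (if length x = N \<and> length y = N \<and> drop n x = drop n y
     then P (take n x) (take n y) else 0)"

lemma sum_basis_append:
  assumes "n \<le> N"
  shows "(\<Sum>x\<in>basis N. g x) = (\<Sum>a\<in>basis n. \<Sum>c\<in>basis (N - n). g (a @ c))"
proof -
  have "bij_betw (\<lambda>(a, c). a @ c) (basis n \<times> basis (N - n)) (basis N)"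
    by (rule bij_betw_byWitness[where f' = "\<lambda>x. (take n x, drop n x)"]) (use assms in auto)
  hence "(\<Sum>x\<in>basis N. g x) = (\<Sum>(a, c)\<in>basis n \<times> basis (N - n). g (a @ c))"
    by (simp add: sum.reindex_bij_betw[symmetric] case_prod_unfold)
  thus ?thesis by (simp add: sum.cartesian_product)
qed

lemma app_local_op:
  assumes "length x = N" "n \<le> N"
  shows "app N (local_op N n P) w x = app n P (slice n w (drop n x)) (take n x)"
proof -
  have "app N (local_op N n P) w x =
      (\<Sum>b\<in>basis n. \<Sum>c\<in>basis (N - n). local_op N n P x (b @ c) * w (b @ c))"
    unfolding app_apply[OF assms(1)] by (rule sum_basis_append[OF assms(2)])
  also have "\<dots> = (\<Sum>b\<in>basis n. \<Sum>c\<in>basis (N - n).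
      if c = drop n x then P (take n x) b * slice n w (drop n x) b else 0)"
    using assms by (intro sum.cong refl) (auto simp: local_op_def slice_apply)
  also have "\<dots> = app n P (slice n w (drop n x)) (take n x)"
    using assms by (simp add: app_apply)
  finally show ?thesis .
qed

lemma psd_local_op:
  assumes "psd n P" "n \<le> N"
  shows "psd N (local_op N n P)"
  unfolding psd_def
proof (intro allI impI)
  fix w :: qvec
  have "inner N w (app N (local_op N n P) w) =
      (\<Sum>a\<in>basis n. \<Sum>c\<in>basis (N - n). cnj (w (a @ c)) * app N (local_op N n P) w (a @ c))"
    unfolding inner_def by (rule sum_basis_append[OF assms(2)])
  also have "\<dots> = (\<Sum>a\<in>basis n. \<Sum>c\<in>basis (N - n).
      cnj (slice n w c a) * app n P (slice n w c) a)"
    using assms(2) by (intro sum.cong refl) (simp add: app_local_op slice_apply)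
  also have "\<dots> = (\<Sum>c\<in>basis (N - n). inner n (slice n w c) (app n P (slice n w c)))"
    unfolding inner_def by (rule sum.swap)
  finally show "Im (inner N w (app N (local_op N n P) w)) = 0 \<and>
      Re (inner N w (app N (local_op N n P) w)) \<ge> 0"
    using assms(1) is_vec_slice unfolding psd_def by (simp add: sum_nonneg)
qed

lemma add_mod_shift_inverse:
  fixes i k N :: nat
  assumes "k < N"
  shows "(i + (k + (N - i mod N))) mod N = k"
proof -
  have "i + (k + (N - i mod N)) = k + N * (i div N) + N"
    using mult_div_mod_eq[of N i] mod_less_divisor[of N i] assms by linarith
  thus ?thesis using assms by simp
qed

lemma bij_betw_add_mod: "bij_betw (\<lambda>j. (i + j) mod N) {..<N} {..<(N::nat)}"
proof (rule bij_betw_byWitness[where f' = "\<lambda>k. (k + (N - i mod N)) mod N"])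
  show "\<forall>j\<in>{..<N}. ((i + j) mod N + (N - i mod N)) mod N = j"
    by (metis add.assoc add_mod_shift_inverse lessThan_iff mod_add_left_eq)
  show "\<forall>k\<in>{..<N}. (i + (k + (N - i mod N)) mod N) mod N = k"
    by (metis add_mod_shift_inverse lessThan_iff mod_add_right_eq)
qed auto

lemma rotate_rotate_inverse:
  assumes "length x = N"
  shows "rotate i (rotate (N - i mod N) x) = x" "rotate (N - i mod N) (rotate i x) = x"
proof -
  have "rotate (i + (N - i mod N)) x = x"
  proof (cases "N = 0")
    case False
    thus ?thesis using add_mod_shift_inverse[of 0 N i] assms by simp
  qed (use assms in simp)
  thus "rotate i (rotate (N - i mod N) x) = x" "rotate (N - i mod N) (rotate i x) = x"
    by (simp_all add: rotate_rotate add.commute)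
qed

lemma bij_betw_rotate_basis: "bij_betw (rotate k) (basis N) (basis N)"
  by (rule bij_betw_byWitness[where f' = "rotate (N - k mod N)"]) (auto simp: rotate_rotate_inverse)

lemma window_eq_take_rotate:
  "length x = N \<Longrightarrow> n \<le> N \<Longrightarrow> window N n i x = take n (rotate i x)"
  by (intro nth_equalityI) (auto simp: window_def nth_rotate add.commute)

lemma outside_window_iff_drop_rotate:
  assumes "length x = N" "length y = N" "n \<le> N"
  shows "(\<forall>k<N. k \<notin> (\<lambda>j. (i + j) mod N) ` {..<n} \<longrightarrow> x ! k = y ! k)
     \<longleftrightarrow> drop n (rotate i x) = drop n (rotate i y)"
proof -
  let ?\<sigma> = "\<lambda>j. (i + j) mod N"
  have bij: "bij_betw ?\<sigma> {..<N} {..<N}"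
    by (rule bij_betw_add_mod)
  have "(\<forall>k<N. k \<notin> ?\<sigma> ` {..<n} \<longrightarrow> x ! k = y ! k) \<longleftrightarrow>
      (\<forall>k\<in>?\<sigma> ` {..<N}. k \<notin> ?\<sigma> ` {..<n} \<longrightarrow> x ! k = y ! k)"
    unfolding bij_betw_imp_surj_on[OF bij] by blast
  also have "\<dots> \<longleftrightarrow> (\<forall>j<N. ?\<sigma> j \<notin> ?\<sigma> ` {..<n} \<longrightarrow> x ! ?\<sigma> j = y ! ?\<sigma> j)"
    by blast
  also have "\<dots> \<longleftrightarrow> (\<forall>j<N. n \<le> j \<longrightarrow> rotate i x ! j = rotate i y ! j)"
    using inj_on_image_mem_iff[OF bij_betw_imp_inj_on[OF bij]] assms
    by (auto simp: nth_rotate add.commute)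
  also have "\<dots> \<longleftrightarrow> (\<forall>j<N - n. rotate i x ! (n + j) = rotate i y ! (n + j))"
    by (metis add.commute le_add1 le_add_diff_inverse2 less_diff_conv)
  also have "\<dots> \<longleftrightarrow> drop n (rotate i x) = drop n (rotate i y)"
    using assms by (simp add: list_eq_iff_nth_eq)
  finally show ?thesis .
qed

lemma embed_eq_local_op:
  "n \<le> N \<Longrightarrow> embed N n i P x y = local_op N n P (rotate i x) (rotate i y)"
  by (auto simp: embed_def local_op_def outside_window_iff_drop_rotate window_eq_take_rotate)

lemma app_embed:
  assumes "n \<le> N"
  shows "app N (embed N n i P) v =
    (\<lambda>x. app N (local_op N n P) (v \<circ> rotate (N - i mod N)) (rotate i x))"
proof (rule ext)
  fix x
  show "app N (embed N n i P) v x = app N (local_op N n P) (v \<circ> rotate (N - i mod N)) (rotate i x)"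
  proof (cases "length x = N")
    case True
    have "app N (embed N n i P) v x = (\<Sum>y\<in>basis N. local_op N n P (rotate i x) (rotate i y) * v y)"
      using True assms by (simp add: app_apply embed_eq_local_op)
    also have "\<dots> = (\<Sum>y\<in>basis N. local_op N n P (rotate i x) (rotate i (rotate (N - i mod N) y)) *
        v (rotate (N - i mod N) y))"
      by (rule sum.reindex_bij_betw[OF bij_betw_rotate_basis, symmetric])
    also have "\<dots> = (\<Sum>y\<in>basis N. local_op N n P (rotate i x) y * v (rotate (N - i mod N) y))"
      by (intro sum.cong refl) (simp add: rotate_rotate_inverse)
    finally show ?thesis
      using True by (simp add: app_apply)
  qed (simp add: app_outside)
qed

lemma psd_embed:
  assumes "psd n P" "n \<le> N"
  shows "psd N (embed N n i P)"
  unfolding psd_def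
proof (intro allI impI)
  fix v :: qvec
  assume v: "is_vec N v"
  define w where "w = v \<circ> rotate (N - i mod N)"
  have "is_vec N w"
    using v by (simp add: w_def is_vec_def)
  have "inner N v (app N (embed N n i P) v) =
      (\<Sum>x\<in>basis N. cnj (v x) * app N (local_op N n P) w (rotate i x))"
    unfolding inner_def app_embed[OF assms(2)] w_def ..
  also have "\<dots> = (\<Sum>x\<in>basis N. cnj (v (rotate (N - i mod N) x)) *
      app N (local_op N n P) w (rotate i (rotate (N - i mod N) x)))"
    by (rule sum.reindex_bij_betw[OF bij_betw_rotate_basis, symmetric])
  also have "\<dots> = (\<Sum>x\<in>basis N. cnj (w x) * app N (local_op N n P) w x)"
    by (intro sum.cong refl) (simp add: w_def rotate_rotate_inverse)
  finally have "inner N v (app N (embed N n i P) v) = inner N w (app N (local_op N n P) w)"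
    by (simp add: inner_def)
  thus "Im (inner N v (app N (embed N n i P) v)) = 0 \<and>
      Re (inner N v (app N (embed N n i P) v)) \<ge> 0"
    using psd_local_op[OF assms] \<open>is_vec N w\<close> unfolding psd_def by simp
qed

lemma app_embed_sym_vec_eq_0:
  assumes "sym_vec N psi" "n \<le> N" "\<And>z. length z = N - n \<Longrightarrow> app n P (slice n psi z) = 0"
  shows "app N (embed N n i P) psi = 0"
proof -
  have "psi (rotate (N - i mod N) x) = psi x" for x
    using sym_vec_rotate[OF assms(1)] assms(1)
    by (cases "length x = N") (simp_all add: sym_vec_def is_vec_def)
  hence "psi \<circ> rotate (N - i mod N) = psi"
    by (simp add: fun_eq_iff)
  show ?thesis
  proof (rule ext)
    fix x
    show "app N (embed N n i P) psi x = 0 x"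
      unfolding app_embed[OF assms(2)] \<open>psi \<circ> rotate (N - i mod N) = psi\<close>
      using assms(2,3) by (cases "length x = N") (simp_all add: app_local_op app_outside)
  qed
qed

lemma sum_embed_nonzero:
  assumes "0 < N" "n \<le> N" "psd n P" "length a = n" "Re (P a a) > 0"
  shows "(\<lambda>x y. \<Sum>i<N. embed N n i P x y) \<noteq> (\<lambda>_ _. 0)"
proof
  define X where "X = a @ replicate (N - n) False"
  have X: "length X = N" "window N n 0 X = a"
    using assms(2,4) by (simp_all add: X_def window_eq_take_rotate)
  have "Re (P a a) \<le> (\<Sum>i<N. Re (P (window N n i X) (window N n i X)))"
    using member_le_sum[of 0 "{..<N}" "\<lambda>i. Re (P (window N n i X) (window N n i X))"]
      assms(1) psd_diag_nonneg[OF assms(3)] X(2) by (simp add: window_def)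
  also have "\<dots> = Re (\<Sum>i<N. embed N n i P X X)"
    using X(1) by (simp add: embed_def)
  also assume "(\<lambda>x y. \<Sum>i<N. embed N n i P x y) = (\<lambda>_ _. 0)"
  finally show False using assms(5) by (simp add: fun_eq_iff)
qed

theorem mainTheorem9:
  fixes N :: nat and psi :: qvec
  assumes "N \<ge> 2"
    and "sym_vec N psi" and "psi \<noteq> (\<lambda>_. 0)"
  defines "n \<equiv> N div 2 + 1"
  defines "rho \<equiv> reduced N n psi"
  defines "K \<equiv> {phi. sym_vec n phi \<and> app n rho phi = (\<lambda>_. 0)}"
  defines "H \<equiv> (\<lambda>x y. \<Sum>i<N. embed N n i (orth_proj n K) x y)"
  shows "(\<exists>phi. sym_vec n phi \<and> phi \<noteq> (\<lambda>_. 0) \<and> app n rho phi = (\<lambda>_. 0))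
    \<and> is_op N H \<and> H \<noteq> (\<lambda>_ _. 0) \<and> psd N H \<and> app N H psi = (\<lambda>_. 0)"
proof -
  have N: "0 < N" "n \<le> N" "N < 2 * n"
    using assms(1) unfolding n_def by auto
  have K: "K = {phi. sym_vec n phi \<and> app n rho phi = 0}"
    by (simp add: K_def zero_fun_def)
  obtain phi where phi: "sym_vec n phi" "phi \<noteq> 0" "app n rho phi = 0"
    using reduced_sym_kernel_exists[OF assms(2) N(2,3)] unfolding rho_def by blast
  have P: "is_orth_proj n K (orth_proj n K)"
    unfolding K by (rule is_orth_proj_orth_proj[OF subspace_sym_vec_kernel]) (simp add: sym_vec_def)
  have psd_P: "psd n (orth_proj n K)"
    by (rule psd_orth_proj[OF P])
  obtain a where a: "length a = n" "Re (orth_proj n K a a) > 0"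
    using orth_proj_diag_pos[OF P _ phi(2)] phi K by blast
  have P_slice: "app n (orth_proj n K) (slice n psi z) = 0" if "length z = N - n" for z
    using orth_proj_app_eq_0[OF P is_vec_slice] reduced_kernel_orthogonal_slice[OF _ that]
    unfolding K rho_def by blast
  have "app N H psi = 0"
    unfolding H_def app_op_sum[OF finite_lessThan]
    using app_embed_sym_vec_eq_0[OF assms(2) N(2) P_slice] by simp
  moreover have "psd N H"
    unfolding H_def by (intro psd_sum psd_embed psd_P N(2)) simp
  moreover have "H \<noteq> (\<lambda>_ _. 0)"
    unfolding H_def by (rule sum_embed_nonzero[OF N(1,2) psd_P a])
  moreover have "is_op N H"
    by (auto simp: H_def is_op_def embed_def)
  ultimately show ?thesis
    using phi unfolding zero_fun_def rho_def by blast
qed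

end
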